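(* Let $t\geqslant 1$ and $k$ be integers with $1\leqslant k\leqslant \frac{2t+1}{3}$. Then $$\sum_{j=0}^{k-1}\binom{2t+1-3k}{t-1-3j}\binom{2k}{1+2j}\leqslant 2\binom{2t-2}{t-1}.$$
   Context: Binomial convention: $\binom{0}{0}=1$ and $\binom{p}{q}=0$ whenever $q<0$, $p<0$ or $p<q$. *)

theory Defs
  imports Main
begin

definition binomZ :: "int \<Rightarrow> int \<Rightarrow> int" where
  "binomZ p q = (if q < 0 \<or> p < 0 \<or> p < q then 0 else int (nat p choose nat q))"

end

theory Submission
  imports Defs HOL.Binomial_Plus
begin

text \<open>Write B(n) for the largest binomial coefficient n choose (n div 2) of row n.
  Every first factor of the sum is at most B(2t+1-3k), and the second factors are the odd-indexed
  binomial coefficients of row 2k, which add up to 2^(2k-1). The recurrences of B give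
  B(n+3) \<ge> 4 B(n) for n \<ge> 1, so 4^(k-1) B(2t+1-3k) \<le> B(2t-2), which is the claim.\<close>

definition middle_binomial :: "nat \<Rightarrow> nat" where
  "middle_binomial n = n choose (n div 2)"

lemma middle_binomial_Suc_even:
  assumes "even n"
  shows "Suc (n div 2) * middle_binomial (Suc n) = Suc n * middle_binomial n"
proof -
  from assms obtain a where n: "n = 2*a" by blast
  have "Suc (2*a) choose Suc a = Suc (2*a) choose a"
    using binomial_symmetric[of a "Suc (2*a)"] by simp
  then show ?thesis
    using Suc_times_binomial_eq[of "2*a" a] by (simp add: n middle_binomial_def)
qed

lemma middle_binomial_Suc_odd:
  assumes "odd n"
  shows "middle_binomial (Suc n) = 2 * middle_binomial n"
proof -
  from assms obtain a where n: "n = 2*a + 1" by (blast elim: oddE)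
  have "Suc (2*a + 1) choose Suc a = (2*a + 1 choose a) + (2*a + 1 choose Suc a)"
    by simp
  moreover have "2*a + 1 choose Suc a = 2*a + 1 choose a"
    using binomial_symmetric[of a "2*a + 1"] by simp
  ultimately show ?thesis
    by (simp add: n middle_binomial_def)
qed

lemma middle_binomial_add_3_even:
  assumes "even n"
  shows "(n div 2 + 2) * (n div 2 + 1) * middle_binomial (n + 3)
    = 2 * (n + 3) * (n + 1) * middle_binomial n"
proof -
  define a where "a = n div 2"
  have e1: "(a + 1) * middle_binomial (n + 1) = (n + 1) * middle_binomial n"
    using middle_binomial_Suc_even[OF assms] by (simp add: a_def)
  have e2: "middle_binomial (n + 2) = 2 * middle_binomial (n + 1)"
    using middle_binomial_Suc_odd[of "n + 1"] assms by simp
  have e3: "(a + 2) * middle_binomial (n + 3) = (n + 3) * middle_binomial (n + 2)"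
  proof -
    have "even (n + 2)" "Suc ((n + 2) div 2) = a + 2" "Suc (n + 2) = n + 3"
      using assms by (simp_all add: a_def)
    then show ?thesis
      using middle_binomial_Suc_even[of "n + 2"] by argo
  qed
  have "(a + 2) * (a + 1) * middle_binomial (n + 3) = (a + 1) * (n + 3) * middle_binomial (n + 2)"
    using e3 by (metis mult.assoc mult.commute)
  also have "\<dots> = 2 * (n + 3) * ((a + 1) * middle_binomial (n + 1))"
    unfolding e2 by (simp only: ac_simps)
  also have "\<dots> = 2 * (n + 3) * (n + 1) * middle_binomial n"
    unfolding e1 by (simp only: ac_simps)
  finally show ?thesis
    by (simp only: a_def)
qed

lemma middle_binomial_add_3_odd:
  assumes "odd n"
  shows "(n div 2 + 2) * middle_binomial (n + 3) = 4 * (n + 2) * middle_binomial n"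
proof -
  have e1: "middle_binomial (n + 1) = 2 * middle_binomial n"
    using middle_binomial_Suc_odd[OF assms] by simp
  have e2: "(n div 2 + 2) * middle_binomial (n + 2) = (n + 2) * middle_binomial (n + 1)"
    using middle_binomial_Suc_even[of "n + 1"] assms by simp
  have e3: "middle_binomial (n + 3) = 2 * middle_binomial (n + 2)"
  proof -
    have "odd (n + 2)"
      using assms by simp
    then show ?thesis
      using middle_binomial_Suc_odd[of "n + 2"] by (simp add: numeral_3_eq_3)
  qed
  have "(n div 2 + 2) * middle_binomial (n + 3) = 2 * ((n div 2 + 2) * middle_binomial (n + 2))"
    unfolding e3 by (simp only: ac_simps)
  also have "\<dots> = 4 * (n + 2) * middle_binomial n"
    unfolding e2 e1 by (simp only: ac_simps)
  finally show ?thesis .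
qed

lemma middle_binomial_add_3_ge:
  assumes "n \<ge> 1"
  shows "4 * middle_binomial n \<le> middle_binomial (n + 3)"
proof (cases "even n")
  case True
  define c where "c = (n div 2 + 2) * (n div 2 + 1)"
  have "4 * c \<le> 2 * (n + 3) * (n + 1)"
    using True assms by (auto simp: c_def algebra_simps elim!: evenE)
  then have "c * (4 * middle_binomial n) \<le> c * middle_binomial (n + 3)"
    using middle_binomial_add_3_even[OF True] unfolding c_def[symmetric]
    by (metis mult_le_mono1 mult.assoc mult.commute)
  then show ?thesis
    by (subst (asm) mult_le_cancel1) (simp add: c_def)
next
  case False
  define c where "c = n div 2 + 2"
  have "c \<le> n + 2"
    by (simp add: c_def)
  then have "c * (4 * middle_binomial n) \<le> c * middle_binomial (n + 3)"
    using middle_binomial_add_3_odd[OF False] unfolding c_def[symmetric]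
    by (metis mult_le_mono1 mult.assoc mult.commute)
  then show ?thesis
    by (subst (asm) mult_le_cancel1) (simp add: c_def)
qed

lemma middle_binomial_add_3_power_ge:
  assumes "n \<ge> 1"
  shows "4^m * middle_binomial n \<le> middle_binomial (n + 3*m)"
proof (induction m)
  case 0
  then show ?case by simp
next
  case (Suc m)
  have "4^Suc m * middle_binomial n \<le> 4 * middle_binomial (n + 3*m)"
    using Suc.IH by simp
  also have "\<dots> \<le> middle_binomial (n + 3*m + 3)"
    using assms by (intro middle_binomial_add_3_ge) simp
  finally show ?case
    by (simp add: algebra_simps)
qed

lemma middle_binomial_add_3_power_ge_even:
  assumes "even (n + 3*m)"
  shows "4^m * middle_binomial n \<le> middle_binomial (n + 3*m)"
proof (cases "n = 0 \<and> m \<noteq> 0")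
  case True
  \<comment> \<open>The single step 0 to 3 fails (middle binomial 3 is 3), but the double step 0 to 6 works.\<close>
  with assms have "m \<ge> 2"
    by simp presburger
  then obtain r where m: "m = r + 2"
    by (metis add.commute le_add_diff_inverse)
  have "(6::nat) choose 3 = 20"
    by (simp add: numeral_eq_Suc)
  then have "middle_binomial 6 = 20"
    by (simp add: middle_binomial_def)
  have "4^m * middle_binomial n = 16 * 4^r"
    using True by (simp add: m middle_binomial_def power_add)
  also have "\<dots> \<le> 4^r * middle_binomial 6"
    using \<open>middle_binomial 6 = 20\<close> by simp
  also have "\<dots> \<le> middle_binomial (6 + 3*r)"
    by (rule middle_binomial_add_3_power_ge) simp
  finally show ?thesis
    using True by (simp add: m algebra_simps)
next
  case False
  then show ?thesis
    using middle_binomial_add_3_power_ge[of n m] by (cases "n = 0") simp_all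
qed

lemma sum_binomial_odd_indices:
  assumes "n > 0"
  shows "2 * (\<Sum>j<n. 2*n choose (2*j + 1)) = 4^n"
proof -
  have odd_indices: "(\<lambda>j. 2*j + 1) ` {..<n} = {..2*n} \<inter> {i. odd i}"
    by (auto elim!: oddE)
  have "(\<Sum>j<n. 2*n choose (2*j + 1)) = (\<Sum>i\<in>{..2*n} \<inter> {i. odd i}. 2*n choose i)"
    by (subst odd_indices[symmetric], subst sum.reindex) (auto simp: inj_on_def)
  also have "\<dots> = (\<Sum>i\<le>2*n. if odd i then 2*n choose i else 0)"
    by (simp add: sum.inter_restrict)
  finally have "int (2 * (\<Sum>j<n. 2*n choose (2*j + 1)))
      = 2 * (\<Sum>i\<le>2*n. if odd i then int (2*n choose i) else 0)"
    by (simp only: of_nat_mult of_nat_sum if_distrib of_nat_0)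
  also have "\<dots> = 2^(2*n)"
    using assms by (intro choose_odd_sum) simp
  also have "\<dots> = int (4^n)"
    by (simp add: power_mult)
  finally show ?thesis
    by (simp only: of_nat_eq_iff)
qed

lemma binomZ_eq:
  assumes "0 \<le> q" and "q \<le> p"
  shows "binomZ p q = int (nat p choose nat q)"
  using assms by (simp add: binomZ_def)

lemma binomZ_le_middle_binomial: "binomZ p q \<le> int (middle_binomial (nat p))"
  unfolding binomZ_def middle_binomial_def using binomial_maximum[of "nat p" "nat q"] by auto

lemma binomZ_nonneg: "binomZ p q \<ge> 0"
  by (simp add: binomZ_def)

lemma binomZ_central:
  assumes "s \<ge> 0"
  shows "binomZ (2*s) s = int (middle_binomial (2 * nat s))"
  using assms by (simp add: binomZ_eq middle_binomial_def nat_mult_distrib)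

lemma sum_binomZ_odd_indices:
  assumes "k \<ge> 1"
  shows "(\<Sum>j\<in>{0..k-1}. binomZ (2*k) (1+2*j)) = 2 * 4^(nat k - 1)"
proof -
  define K where "K = nat k"
  have K: "K > 0" "k = int K"
    using assms by (simp_all add: K_def)
  have indices: "{0..k-1} = int ` {..<K}"
    using K image_int_atLeastLessThan[of 0 K] atLeastLessThanPlusOne_atLeastAtMost_int[of 0 "k - 1"]
    by (simp add: lessThan_atLeast0)
  have "(\<Sum>j\<in>{0..k-1}. binomZ (2*k) (1+2*j)) = int (\<Sum>j<K. 2*K choose (2*j + 1))"
    unfolding indices by (subst sum.reindex) (auto simp: K binomZ_eq nat_add_distrib nat_mult_distrib)
  also have "(\<Sum>j<K. 2*K choose (2*j + 1)) = 2 * 4^(K-1)"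
    using sum_binomial_odd_indices[OF \<open>K > 0\<close>] \<open>K > 0\<close> by (simp add: power_eq_if)
  finally show ?thesis
    by (simp add: K_def)
qed

theorem lemma5:
  fixes t k :: int
  assumes "t \<ge> 1" and "1 \<le> k" and "3 * k \<le> 2 * t + 1"
  shows "(\<Sum>j\<in>{0..k-1}. binomZ (2*t+1-3*k) (t-1-3*j) * binomZ (2*k) (1+2*j))
           \<le> 2 * binomZ (2*t-2) (t-1)"
proof -
  define N where "N = nat (2*t+1-3*k)"
  have "N + 3*(nat k - 1) = 2 * nat (t-1)"
    using assms by (simp add: N_def)
  then have growth: "4^(nat k - 1) * middle_binomial N \<le> middle_binomial (2 * nat (t-1))"
    using middle_binomial_add_3_power_ge_even[of N "nat k - 1"] by simp
  have "(\<Sum>j\<in>{0..k-1}. binomZ (2*t+1-3*k) (t-1-3*j) * binomZ (2*k) (1+2*j))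
        \<le> (\<Sum>j\<in>{0..k-1}. int (middle_binomial N) * binomZ (2*k) (1+2*j))"
    unfolding N_def by (intro sum_mono mult_right_mono binomZ_le_middle_binomial binomZ_nonneg)
  also have "\<dots> = 2 * int (4^(nat k - 1) * middle_binomial N)"
    using assms by (simp add: sum_distrib_left[symmetric] sum_binomZ_odd_indices)
  also have "\<dots> \<le> 2 * int (middle_binomial (2 * nat (t-1)))"
    using growth by (simp del: of_nat_mult)
  also have "\<dots> = 2 * binomZ (2*t-2) (t-1)"
    using assms binomZ_central[of "t-1"] by (simp add: algebra_simps)
  finally show ?thesis .
qed

end
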